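(* Let $p>1$ and let $A$ be a real $r$-matrix of order $n_1\times\cdots\times n_r$. Then: (a) $\eta^{(p)}(\mathrm{sym}(A))\leq \dfrac{r!}{r^{r/p}}\|A\|_p$; (b) if $A$ is nonnegative, then $\eta^{(p)}(\mathrm{sym}(A))=\dfrac{r!}{r^{r/p}}\|A\|_p$.
   Context: An $r$-matrix of order $n_1\times\cdots\times n_r$ is a function on $[n_1]\times\cdots\times[n_r]$ with values $a_{i_1,\ldots,i_r}$. Symmetrant: let $n=n_1+\cdots+n_r$, partition $[n]$ into consecutive intervals $N_1,\ldots,N_r$ with $|N_k|=n_k$; for $j\in[n]$ let $\sigma(j)$ be the $k$ with $j\in N_k$ and $\theta(j)$ the position of $j$ within $N_{\sigma(j)}$ (in increasing order). Then $\mathrm{sym}(A)$ is the cubical $r$-matrix $B$ of order $n$ with $b_{j_1,\ldots,j_r}=0$ if $\sigma(j_1),\ldots,\sigma(j_r)$ are not all distinct, and otherwise $b_{j_1,\ldots,j_r}=a_{i_1,\ldots,i_r}$ where $i_{\sigma(j_s)}=\theta(j_s)$ for all $s\in[r]$. For a real symmetric cubical $B$ of order $n$, $P_B(\mathbf{x})=\sum b_{j_1,\ldots,j_r}x_{j_1}\cdots x_{j_r}$ and $\eta^{(p)}(B)=\max\{|P_B(\mathbf{x})|:\mathbf{x}\in\mathbb{R}^n,|\mathbf{x}|_p=1\}$. The spectral $p$-norm is $\|A\|_p=\max\{|\sum a_{i_1,\ldots,i_r}\overline{x^{(1)}_{i_1}}\cdots\overline{x^{(r)}_{i_r}}|:\mathbf{x}^{(k)}\in\mathbb{C}^{n_k},\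 |\mathbf{x}^{(k)}|_p=1\ \forall k\}$. *)

theory Defs
  imports "HOL-Analysis.Analysis"
begin

text \<open>Conventions: indices are 0-based. An r-matrix of order n_1 x ... x n_r is a
function A on index tuples i (functions nat => nat), where only tuples in
PiE {..<r} (\<lambda>k. {..<n k}) matter; the orders are n 0, ..., n (r-1).\<close>

definition idx :: "nat \<Rightarrow> (nat \<Rightarrow> nat) \<Rightarrow> (nat \<Rightarrow> nat) set" where
  "idx r n = PiE {..<r} (\<lambda>k. {..<n k})"

definition pnorm :: "real \<Rightarrow> nat \<Rightarrow> (nat \<Rightarrow> 'a::real_normed_vector) \<Rightarrow> real" where
  "pnorm p m x = (\<Sum>i<m. norm (x i) powr p) powr (1 / p)"

definition offs :: "(nat \<Rightarrow> nat) \<Rightarrow> nat \<Rightarrow> nat" where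
  "offs n k = (\<Sum>l<k. n l)"

definition sig :: "nat \<Rightarrow> (nat \<Rightarrow> nat) \<Rightarrow> nat \<Rightarrow> nat" where
  "sig r n j = (THE k. k < r \<and> offs n k \<le> j \<and> j < offs n k + n k)"

definition theta :: "nat \<Rightarrow> (nat \<Rightarrow> nat) \<Rightarrow> nat \<Rightarrow> nat" where
  "theta r n j = j - offs n (sig r n j)"

definition symm :: "nat \<Rightarrow> (nat \<Rightarrow> nat) \<Rightarrow> ((nat \<Rightarrow> nat) \<Rightarrow> real) \<Rightarrow> (nat \<Rightarrow> nat) \<Rightarrow> real" where
  "symm r n A j =
     (if inj_on (\<lambda>s. sig r n (j s)) {..<r}
      then A (\<lambda>k\<in>{..<r}. theta r n (j (THE s. s < r \<and> sig r n (j s) = k)))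
      else 0)"

definition formP :: "nat \<Rightarrow> nat \<Rightarrow> ((nat \<Rightarrow> nat) \<Rightarrow> real) \<Rightarrow> (nat \<Rightarrow> real) \<Rightarrow> real" where
  "formP r N B x = (\<Sum>j\<in>idx r (\<lambda>_. N). B j * (\<Prod>s<r. x (j s)))"

definition eta :: "real \<Rightarrow> nat \<Rightarrow> nat \<Rightarrow> ((nat \<Rightarrow> nat) \<Rightarrow> real) \<Rightarrow> real" where
  "eta p r N B = Sup {\<bar>formP r N B x\<bar> | x. pnorm p N x = 1}"

definition spnorm :: "real \<Rightarrow> nat \<Rightarrow> (nat \<Rightarrow> nat) \<Rightarrow> ((nat \<Rightarrow> nat) \<Rightarrow> real) \<Rightarrow> real" where
  "spnorm p r n A = Sup {cmod (\<Sum>i\<in>idx r n. complex_of_real (A i) * (\<Prod>k<r. cnj (xs k (i k))))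
                        | xs :: nat \<Rightarrow> nat \<Rightarrow> complex. \<forall>k<r. pnorm p (n k) (xs k) = 1}"

end

theory Submission
  imports Defs
begin

text \<open>
  Split a vector x of length n_1 + ... + n_r into its blocks x^(1), ..., x^(r). Every nonzero
  entry of sym(A) sits at a tuple (offs(\<pi> s) + i(\<pi> s))_s for a unique permutation \<pi> and index
  tuple i, and equals a_i; hence P_sym(A)(x) = r! A(x^(1), ..., x^(r)) for the multilinear form
  of A. By homogeneity |A(x^(1), ..., x^(r))| \<le> |x^(1)|_p \<cdots> |x^(r)|_p \<parallel>A\<parallel>_p, and since the
  p-th powers of the block norms sum to 1, AM-GM bounds their product by r^(-r/p). Conversely,
  for nonnegative A and unit complex vectors x^(k), the real unit vector whose k-th block is
  r^(-1/p) |x^(k)| gives, by the triangle inequality, P_sym(A) \<ge> r! r^(-r/p) |A(x^(1), ..., x^(r))|.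
\<close>

lemma offs_add_le:
  assumes "k < k'"
  shows "offs n k + n k \<le> offs n k'"
proof -
  have "offs n k + n k = (\<Sum>l<Suc k. n l)" by (simp add: offs_def)
  also have "\<dots> \<le> (\<Sum>l<k'. n l)" using assms by (intro sum_mono2) auto
  finally show ?thesis by (simp add: offs_def)
qed

lemma offs_block_unique:
  assumes "offs n k \<le> j" "j < offs n k + n k" "offs n k' \<le> j" "j < offs n k' + n k'"
  shows "k = k'"
  using offs_add_le[of k k' n] offs_add_le[of k' k n] assms by (cases k k' rule: linorder_cases) auto

lemma offs_block_exists: "j < offs n r \<Longrightarrow> \<exists>k<r. offs n k \<le> j \<and> j < offs n k + n k"
proof (induction r)
  case 0
  then show ?case by (simp add: offs_def)
next
  case (Suc r)
  show ?case
  proof (cases "j < offs n r")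
    case True
    then show ?thesis using Suc.IH by (meson less_Suc_eq)
  next
    case False
    then show ?thesis using Suc.prems by (auto simp: offs_def intro!: exI[of _ r])
  qed
qed

lemma sig_block_bounds:
  assumes "j < offs n r"
  shows "sig r n j < r" "offs n (sig r n j) \<le> j" "j < offs n (sig r n j) + n (sig r n j)"
proof -
  have "\<exists>!k. k < r \<and> offs n k \<le> j \<and> j < offs n k + n k"
    using offs_block_exists[OF assms] offs_block_unique by blast
  from theI'[OF this] show "sig r n j < r" "offs n (sig r n j) \<le> j" "j < offs n (sig r n j) + n (sig r n j)"
    unfolding sig_def by auto
qed

lemma sig_block: "k < r \<Longrightarrow> i < n k \<Longrightarrow> sig r n (offs n k + i) = k"
  unfolding sig_def by (rule the_equality) (auto intro: offs_block_unique)

lemma theta_block: "k < r \<Longrightarrow> i < n k \<Longrightarrow> theta r n (offs n k + i) = i"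
  by (simp add: theta_def sig_block)

lemma offs_block_less: "k < r \<Longrightarrow> i < n k \<Longrightarrow> offs n k + i < offs n r"
  using offs_add_le[of k r n] by linarith

lemma sum_blocks: "(\<Sum>m<offs n r. f m) = (\<Sum>k<r. \<Sum>i<n k. f (offs n k + i))"
proof (induction r)
  case 0
  then show ?case by (simp add: offs_def)
next
  case (Suc r)
  have split: "(\<Sum>m<a + b. f m) = (\<Sum>m<a. f m) + (\<Sum>i<b. f (a + i))" for a b :: nat
    by (induction b) (auto simp: add.assoc)
  have "offs n (Suc r) = offs n r + n r" by (simp add: offs_def)
  then show ?case using Suc by (simp add: split)
qed

definition blocks :: "(nat \<Rightarrow> nat) \<Rightarrow> (nat \<Rightarrow> 'a) \<Rightarrow> nat \<Rightarrow> nat \<Rightarrow> 'a" where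
  "blocks n x k i = x (offs n k + i)"

lemma ex_blocks_eq: "\<exists>x. \<forall>k<r. \<forall>i<n k. blocks n x k i = z k i"
  by (auto simp: blocks_def sig_block theta_block intro!: exI[of _ "\<lambda>m. z (sig r n m) (theta r n m)"])

lemma pnorm_nonneg: "pnorm p m x \<ge> 0"
  by (simp add: pnorm_def)

lemma pnorm_powr: "p > 0 \<Longrightarrow> pnorm p m x powr p = (\<Sum>i<m. norm (x i) powr p)"
  by (simp add: pnorm_def powr_powr sum_nonneg)

lemma pnorm_eq_1_iff: "p > 0 \<Longrightarrow> pnorm p m x = 1 \<longleftrightarrow> (\<Sum>i<m. norm (x i) powr p) = 1"
  by (metis pnorm_powr pnorm_def powr_one_eq_one)

lemma pnorm_eq_0_iff: "p > 0 \<Longrightarrow> pnorm p m x = 0 \<longleftrightarrow> (\<forall>i<m. x i = 0)"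
  by (auto simp: pnorm_def sum_nonneg_eq_0_iff)

lemma norm_le_1_if_pnorm_eq_1:
  assumes "p > 0" "pnorm p m x = 1" "i < m"
  shows "norm (x i) \<le> 1"
proof -
  have "norm (x i) powr p \<le> (\<Sum>i<m. norm (x i) powr p)"
    using assms(3) by (intro member_le_sum) auto
  also have "\<dots> = 1" using assms(1,2) pnorm_eq_1_iff by blast
  finally have "norm (x i) powr p \<le> 1 powr p" by simp
  then show ?thesis using assms(1) by (meson norm_ge_zero not_le powr_less_mono2 zero_le_one)
qed

lemma pnorm_cong: "(\<And>i. i < m \<Longrightarrow> norm (x i) = norm (y i)) \<Longrightarrow> pnorm p m x = pnorm p m y"
  by (simp add: pnorm_def)

lemma pnorm_scaleR: "p > 0 \<Longrightarrow> pnorm p m (\<lambda>i. c *\<^sub>R x i) = \<bar>c\<bar> * pnorm p m x"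
  by (simp add: pnorm_def powr_mult sum_distrib_left[symmetric] powr_powr sum_nonneg)

lemma pnorm_unit_vector:
  assumes "m \<ge> 1"
  shows "pnorm p m (\<lambda>i. if i = 0 then 1 else 0 :: 'a::real_normed_algebra_1) = 1"
proof -
  have "(\<Sum>i<m. norm (if i = 0 then 1 else 0 :: 'a) powr p) = (\<Sum>i<m. if i = 0 then 1 else 0)"
    by (intro sum.cong) auto
  then show ?thesis using assms by (simp add: pnorm_def)
qed

lemma pnorm_blocks:
  "p > 0 \<Longrightarrow> pnorm p (offs n r) x powr p = (\<Sum>k<r. pnorm p (n k) (blocks n x k) powr p)"
  by (simp add: pnorm_powr sum_blocks blocks_def)

definition mform :: "nat \<Rightarrow> (nat \<Rightarrow> nat) \<Rightarrow> ((nat \<Rightarrow> nat) \<Rightarrow> 'a::comm_semiring_1) \<Rightarrow> (nat \<Rightarrow> nat \<Rightarrow> 'a) \<Rightarrow> 'a"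
  where "mform r n A xs = (\<Sum>i\<in>idx r n. A i * (\<Prod>k<r. xs k (i k)))"

lemma finite_idx: "finite (idx r n)"
  by (simp add: idx_def finite_PiE)

lemma idx_less: "i \<in> idx r n \<Longrightarrow> k < r \<Longrightarrow> i k < n k"
  by (auto simp: idx_def PiE_iff)

lemma formP_eq_mform: "formP r N B x = mform r (\<lambda>_. N) B (\<lambda>_. x)"
  by (simp add: formP_def mform_def)

lemma spnorm_eq_Sup_mform:
  "spnorm p r n A = Sup {cmod (mform r n (\<lambda>i. complex_of_real (A i)) (\<lambda>k i. cnj (xs k i)))
                        | xs. \<forall>k<r. pnorm p (n k) (xs k) = 1}"
  by (simp add: spnorm_def mform_def)

lemma mform_cong:
  "(\<And>k i. k < r \<Longrightarrow> i < n k \<Longrightarrow> xs k i = ys k i) \<Longrightarrow> mform r n A xs = mform r n A ys"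
  unfolding mform_def by (intro sum.cong refl arg_cong2[where f = "(*)"] prod.cong) (auto dest: idx_less)

lemma mform_scale: "mform r n A (\<lambda>k i. c k * xs k i) = (\<Prod>k<r. c k) * mform r n A xs"
  by (simp add: mform_def prod.distrib sum_distrib_left ac_simps)

lemma mform_of_real:
  "mform r n (\<lambda>i. of_real (A i)) (\<lambda>k i. of_real (xs k i)) = (of_real (mform r n A xs) :: 'a::{real_algebra_1,comm_semiring_1})"
  by (simp add: mform_def)

lemma norm_mform_le:
  fixes A :: "(nat \<Rightarrow> nat) \<Rightarrow> 'a::{real_normed_field}"
  assumes "\<And>k i. k < r \<Longrightarrow> i < n k \<Longrightarrow> norm (xs k i) \<le> 1"
  shows "norm (mform r n A xs) \<le> (\<Sum>i\<in>idx r n. norm (A i))"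
  unfolding mform_def
proof (rule order_trans[OF norm_sum sum_mono])
  fix i assume i: "i \<in> idx r n"
  have "norm (\<Prod>k<r. xs k (i k)) \<le> 1"
    using assms[OF _ idx_less[OF i]] by (auto simp: prod_norm[symmetric] intro!: prod_le_1)
  then show "norm (A i * (\<Prod>k<r. xs k (i k))) \<le> norm (A i)"
    by (simp add: norm_mult mult_left_le)
qed

text \<open>The position in sym(A) at which the entry a_i reappears after permuting the blocks by \<pi>.\<close>

definition block_tuple :: "nat \<Rightarrow> (nat \<Rightarrow> nat) \<Rightarrow> (nat \<Rightarrow> nat) \<Rightarrow> (nat \<Rightarrow> nat) \<Rightarrow> nat \<Rightarrow> nat" where
  "block_tuple r n \<pi> i = (\<lambda>s\<in>{..<r}. offs n (\<pi> s) + i (\<pi> s))"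

lemma block_tuple_idx:
  assumes "\<pi> permutes {..<r}" "i \<in> idx r n"
  shows "block_tuple r n \<pi> i \<in> idx r (\<lambda>_. offs n r)"
  using offs_block_less idx_less[OF assms(2)] permutes_in_image[OF assms(1)]
  by (auto simp: block_tuple_def idx_def)

lemma
  assumes "\<pi> permutes {..<r}" "i \<in> idx r n" "s < r"
  shows sig_block_tuple: "sig r n (block_tuple r n \<pi> i s) = \<pi> s"
    and theta_block_tuple: "theta r n (block_tuple r n \<pi> i s) = i (\<pi> s)"
proof -
  have "\<pi> s < r" using permutes_in_image[OF assms(1)] assms(3) by auto
  with idx_less[OF assms(2) this] assms(3)
  show "sig r n (block_tuple r n \<pi> i s) = \<pi> s" "theta r n (block_tuple r n \<pi> i s) = i (\<pi> s)"
    by (simp_all add: block_tuple_def sig_block theta_block)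
qed

lemma inj_on_sig_block_tuple:
  assumes "\<pi> permutes {..<r}" "i \<in> idx r n"
  shows "inj_on (\<lambda>s. sig r n (block_tuple r n \<pi> i s)) {..<r}"
  using permutes_inj_on[OF assms(1)] by (simp add: inj_on_def sig_block_tuple[OF assms])

lemma symm_block_tuple:
  assumes "\<pi> permutes {..<r}" "i \<in> idx r n"
  shows "symm r n A (block_tuple r n \<pi> i) = A i"
proof -
  have inv_less: "inv \<pi> k < r" if "k < r" for k
    using permutes_in_image[OF permutes_inv[OF assms(1)]] that by simp
  have "(THE s. s < r \<and> sig r n (block_tuple r n \<pi> i s) = k) = inv \<pi> k" if "k < r" for k
    using inv_less[OF that] permutes_inverses[OF assms(1)]
    by (intro the_equality) (auto simp: sig_block_tuple[OF assms])
  then have "(\<lambda>k\<in>{..<r}. theta r n (block_tuple r n \<pi> i (THE s. s < r \<and> sig r n (block_tuple r n \<pi> i s) = k))) = i"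
    using assms(2) inv_less permutes_inverses(1)[OF assms(1)]
    by (auto simp: theta_block_tuple[OF assms] idx_def PiE_iff extensional_def)
  then show ?thesis using inj_on_sig_block_tuple[OF assms] by (simp add: symm_def)
qed

lemma inj_on_block_tuple:
  "inj_on (\<lambda>(\<pi>, i). block_tuple r n \<pi> i) ({\<pi>. \<pi> permutes {..<r}} \<times> idx r n)"
proof (rule inj_onI, clarify)
  fix \<pi> i \<pi>' i'
  assume a: "\<pi> permutes {..<r}" "i \<in> idx r n" "\<pi>' permutes {..<r}" "i' \<in> idx r n"
    and eq: "block_tuple r n \<pi> i = block_tuple r n \<pi>' i'"
  have \<pi>: "\<pi> s = \<pi>' s" for s
    using arg_cong[OF eq, of "\<lambda>j. sig r n (j s)"] permutes_not_in[OF a(1)] permutes_not_in[OF a(3)]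
    by (cases "s < r") (auto simp: sig_block_tuple[OF a(1,2)] sig_block_tuple[OF a(3,4)])
  have "i k = i' k" if "k < r" for k
  proof -
    have "inv \<pi> k < r" "\<pi> (inv \<pi> k) = k"
      using permutes_in_image[OF permutes_inv[OF a(1)]] permutes_inverses(1)[OF a(1)] that by auto
    then show ?thesis
      using arg_cong[OF eq, of "\<lambda>j. theta r n (j (inv \<pi> k))"] \<pi>[of "inv \<pi> k"]
      by (simp add: theta_block_tuple[OF a(1,2)] theta_block_tuple[OF a(3,4)])
  qed
  then have "i = i'" using a(2,4) unfolding idx_def by (intro PiE_ext) auto
  with \<pi> show "\<pi> = \<pi>' \<and> i = i'" by auto
qed

lemma block_tuple_surj:
  assumes "j \<in> idx r (\<lambda>_. offs n r)" "inj_on (\<lambda>s. sig r n (j s)) {..<r}"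
  obtains \<pi> i where "\<pi> permutes {..<r}" "i \<in> idx r n" "j = block_tuple r n \<pi> i"
proof -
  have j: "j s < offs n r" if "s < r" for s using assms(1) that by (auto simp: idx_def PiE_iff)
  define \<pi> where "\<pi> = (\<lambda>s. if s < r then sig r n (j s) else s)"
  have inj: "inj_on \<pi> {..<r}" using assms(2) by (auto simp: \<pi>_def inj_on_def)
  have \<pi>: "\<pi> permutes {..<r}"
    by (rule inj_imp_permutes[OF inj]) (auto simp: \<pi>_def sig_block_bounds(1)[OF j])
  have the_eq: "(THE s. s < r \<and> sig r n (j s) = \<pi> t) = t" if "t < r" for t
    using that inj by (intro the_equality) (auto simp: \<pi>_def inj_on_def)
  define i where "i = (\<lambda>k\<in>{..<r}. theta r n (j (THE s. s < r \<and> sig r n (j s) = k)))"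
  have i_\<pi>: "i (\<pi> t) = theta r n (j t)" if "t < r" for t
    using permutes_in_image[OF \<pi>] that by (simp add: i_def the_eq)
  have "i \<in> idx r n"
    unfolding idx_def
  proof (rule PiE_I)
    fix k assume "k \<in> {..<r}"
    then obtain t where t: "t < r" "k = \<pi> t" using permutes_image[OF \<pi>] by (metis imageE lessThan_iff)
    have "i (\<pi> t) < n (\<pi> t)"
      unfolding i_\<pi>[OF t(1)] using sig_block_bounds[OF j[OF t(1)]] t(1) by (simp add: theta_def \<pi>_def)
    then show "i k \<in> {..<n k}" using t(2) by simp
  qed (simp add: i_def)
  moreover have "j = block_tuple r n \<pi> i"
  proof
    fix s show "j s = block_tuple r n \<pi> i s"
      using assms(1) i_\<pi>[of s] sig_block_bounds[OF j[of s]]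
      by (cases "s < r") (auto simp: block_tuple_def idx_def PiE_iff extensional_def theta_def \<pi>_def)
  qed
  ultimately show ?thesis using \<pi> that by blast
qed

lemma formP_symm: "formP r (offs n r) (symm r n A) x = fact r * mform r n A (blocks n x)"
proof -
  define P where "P = {\<pi>. \<pi> permutes {..<r}}"
  define S where "S = {j \<in> idx r (\<lambda>_. offs n r). inj_on (\<lambda>s. sig r n (j s)) {..<r}}"
  let ?f = "\<lambda>j. symm r n A j * (\<Prod>s<r. x (j s))"
  have "formP r (offs n r) (symm r n A) x = sum ?f S"
    unfolding formP_def by (rule sum.mono_neutral_right) (auto simp: S_def finite_idx symm_def)
  also have "S = (\<lambda>(\<pi>, i). block_tuple r n \<pi> i) ` (P \<times> idx r n)"
  proof
    show "S \<subseteq> (\<lambda>(\<pi>, i). block_tuple r n \<pi> i) ` (P \<times> idx r n)"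
    proof
      fix j assume "j \<in> S"
      then obtain \<pi> i where "\<pi> permutes {..<r}" "i \<in> idx r n" "j = block_tuple r n \<pi> i"
        unfolding S_def by (blast elim: block_tuple_surj)
      then show "j \<in> (\<lambda>(\<pi>, i). block_tuple r n \<pi> i) ` (P \<times> idx r n)"
        unfolding P_def by blast
    qed
    show "(\<lambda>(\<pi>, i). block_tuple r n \<pi> i) ` (P \<times> idx r n) \<subseteq> S"
      using block_tuple_idx inj_on_sig_block_tuple by (auto simp: S_def P_def)
  qed
  also have "sum ?f \<dots> = (\<Sum>(\<pi>, i)\<in>P \<times> idx r n. ?f (block_tuple r n \<pi> i))"
    by (subst sum.reindex) (auto simp: P_def inj_on_block_tuple intro!: sum.cong)
  also have "\<dots> = (\<Sum>(\<pi>, i)\<in>P \<times> idx r n. A i * (\<Prod>k<r. blocks n x k (i k)))"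
  proof (intro sum.cong refl, clarify)
    fix \<pi> i assume "\<pi> \<in> P" "i \<in> idx r n"
    then have \<pi>: "\<pi> permutes {..<r}" and i: "i \<in> idx r n" by (auto simp: P_def)
    have "(\<Prod>s<r. x (block_tuple r n \<pi> i s)) = (\<Prod>s<r. ((\<lambda>k. blocks n x k (i k)) \<circ> \<pi>) s)"
      by (intro prod.cong) (auto simp: block_tuple_def blocks_def)
    also have "\<dots> = (\<Prod>k<r. blocks n x k (i k))" by (rule prod.permute[symmetric, OF \<pi>])
    finally show "?f (block_tuple r n \<pi> i) = A i * (\<Prod>k<r. blocks n x k (i k))"
      by (simp add: symm_block_tuple[OF \<pi> i])
  qed
  also have "\<dots> = real (card P) * mform r n A (blocks n x)"
    by (simp add: sum.cartesian_product[symmetric] mform_def)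
  also have "card P = fact r" unfolding P_def by (rule card_permutations) auto
  finally show ?thesis by simp
qed

lemma eta_upper:
  assumes "p > 0" "pnorm p N x = 1"
  shows "\<bar>formP r N B x\<bar> \<le> eta p r N B"
  unfolding eta_def
proof (rule cSup_upper)
  show "bdd_above {\<bar>formP r N B x\<bar> | x. pnorm p N x = 1}"
  proof (rule bdd_aboveI, clarify)
    fix y :: "nat \<Rightarrow> real" assume "pnorm p N y = 1"
    then have "norm (y i) \<le> 1" if "i < N" for i
      using norm_le_1_if_pnorm_eq_1[OF assms(1)] that by blast
    then show "\<bar>formP r N B y\<bar> \<le> (\<Sum>j\<in>idx r (\<lambda>_. N). norm (B j))"
      using norm_mform_le[of r "\<lambda>_. N" "\<lambda>_. y" B] by (simp add: formP_eq_mform)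
  qed
qed (use assms(2) in blast)

lemma eta_least:
  assumes "N \<ge> 1" "\<And>x. pnorm p N x = 1 \<Longrightarrow> \<bar>formP r N B x\<bar> \<le> c"
  shows "eta p r N B \<le> c"
  unfolding eta_def using pnorm_unit_vector[OF assms(1)] assms(2) by (intro cSup_least) auto

lemma spnorm_upper:
  assumes "p > 0" "\<forall>k<r. pnorm p (n k) (xs k) = 1"
  shows "cmod (mform r n (\<lambda>i. complex_of_real (A i)) (\<lambda>k i. cnj (xs k i))) \<le> spnorm p r n A"
  unfolding spnorm_eq_Sup_mform
proof (rule cSup_upper)
  show "bdd_above {cmod (mform r n (\<lambda>i. complex_of_real (A i)) (\<lambda>k i. cnj (xs k i)))
                  | xs. \<forall>k<r. pnorm p (n k) (xs k) = 1}"
  proof (rule bdd_aboveI, clarify)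
    fix ys :: "nat \<Rightarrow> nat \<Rightarrow> complex" assume "\<forall>k<r. pnorm p (n k) (ys k) = 1"
    then show "cmod (mform r n (\<lambda>i. complex_of_real (A i)) (\<lambda>k i. cnj (ys k i)))
               \<le> (\<Sum>i\<in>idx r n. cmod (complex_of_real (A i)))"
      using norm_le_1_if_pnorm_eq_1[OF assms(1)] by (intro norm_mform_le) auto
  qed
qed (use assms(2) in blast)

lemma spnorm_least:
  assumes "\<forall>k<r. n k \<ge> 1"
    and "\<And>xs. \<forall>k<r. pnorm p (n k) (xs k) = 1 \<Longrightarrow>
           cmod (mform r n (\<lambda>i. complex_of_real (A i)) (\<lambda>k i. cnj (xs k i))) \<le> c"
  shows "spnorm p r n A \<le> c"
proof -
  have "\<forall>k<r. pnorm p (n k) (\<lambda>i. if i = 0 then 1 else 0 :: complex) = 1"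
    using assms(1) pnorm_unit_vector by blast
  then show ?thesis
    unfolding spnorm_eq_Sup_mform using assms(2) by (intro cSup_least) auto
qed

lemma abs_mform_le_spnorm:
  fixes xs :: "nat \<Rightarrow> nat \<Rightarrow> real"
  assumes "p > 0" "\<forall>k<r. pnorm p (n k) (xs k) = 1"
  shows "\<bar>mform r n A xs\<bar> \<le> spnorm p r n A"
proof -
  have "\<forall>k<r. pnorm p (n k) (\<lambda>i. complex_of_real (xs k i)) = 1"
    using assms(2) pnorm_cong[of _ "\<lambda>i. complex_of_real (xs _ i)" "xs _" p] by simp
  from spnorm_upper[OF assms(1) this, of A] show ?thesis
    by (simp add: mform_of_real)
qed

lemma spnorm_nonneg:
  assumes "p > 0" "\<forall>k<r. n k \<ge> 1"
  shows "spnorm p r n A \<ge> 0"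
proof -
  have "\<forall>k<r. pnorm p (n k) (\<lambda>i. if i = 0 then 1 else 0 :: complex) = 1"
    using assms(2) pnorm_unit_vector by blast
  from spnorm_upper[OF assms(1) this, of A] show ?thesis by (meson norm_ge_zero order_trans)
qed

lemma abs_mform_le_pnorm_prod:
  fixes xs :: "nat \<Rightarrow> nat \<Rightarrow> real"
  assumes "p > 0" "\<forall>k<r. n k \<ge> 1"
  shows "\<bar>mform r n A xs\<bar> \<le> (\<Prod>k<r. pnorm p (n k) (xs k)) * spnorm p r n A"
proof (cases "\<exists>k<r. pnorm p (n k) (xs k) = 0")
  case True
  then obtain k where "k < r" "\<forall>i<n k. xs k i = 0" using pnorm_eq_0_iff[OF assms(1)] by blast
  then have "mform r n A xs = 0"
    unfolding mform_def by (intro sum.neutral ballI) (auto dest: idx_less intro: prod_zero)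
  then show ?thesis using spnorm_nonneg[OF assms] by (simp add: pnorm_nonneg prod_nonneg)
next
  case False
  define a where "a k = pnorm p (n k) (xs k)" for k
  have a: "a k > 0" if "k < r" for k
    using False that pnorm_nonneg[of p "n k" "xs k"] by (auto simp: a_def less_le)
  define ys where "ys = (\<lambda>k i. inverse (a k) * xs k i)"
  have "pnorm p (n k) (ys k) = 1" if "k < r" for k
    using pnorm_scaleR[OF assms(1), of "n k" "inverse (a k)" "xs k"] a[OF that]
    by (simp add: ys_def a_def)
  then have "\<bar>mform r n A ys\<bar> \<le> spnorm p r n A" using abs_mform_le_spnorm[OF assms(1)] by blast
  moreover have "mform r n A xs = (\<Prod>k<r. a k) * mform r n A ys"
    unfolding ys_def mform_scale[symmetric] using a by (intro mform_cong) (simp add: less_imp_neq[symmetric])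
  ultimately show ?thesis
    using a by (simp add: a_def abs_mult prod_nonneg pnorm_nonneg mult_left_mono)
qed

lemma prod_le_of_sum_powr_eq_1:
  fixes a :: "nat \<Rightarrow> real"
  assumes "r \<ge> 1" "p > 0" "\<And>k. k < r \<Longrightarrow> a k \<ge> 0" "(\<Sum>k<r. a k powr p) = 1"
  shows "(\<Prod>k<r. a k) \<le> real r powr (- (real r / p))"
proof -
  have "(\<Prod>k<r. a k powr p) powr (1 / real r) \<le> (\<Sum>k<r. a k powr p / real r)"
    using arith_geom_mean[of "{..<r}" "\<lambda>k. a k powr p"] assms(1) by (simp add: lessThan_empty_iff)
  also have "\<dots> = 1 / real r" using assms(4) by (simp add: sum_divide_distrib[symmetric])
  finally have am_gm: "(\<Prod>k<r. a k powr p) powr (1 / real r) \<le> 1 / real r" .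
  have "(\<Prod>k<r. a k) = ((\<Prod>k<r. a k powr p) powr (1 / real r)) powr (real r / p)"
    using assms by (simp add: prod_powr_distrib prod_nonneg powr_powr)
  also have "\<dots> \<le> (1 / real r) powr (real r / p)"
    using am_gm assms(2) by (intro powr_mono2) auto
  also have "\<dots> = real r powr (- (real r / p))"
    using assms(1) by (simp add: powr_divide powr_minus_divide)
  finally show ?thesis .
qed

lemma abs_formP_symm_le:
  assumes "p > 0" "r \<ge> 1" "\<forall>k<r. n k \<ge> 1" "pnorm p (offs n r) x = 1"
  shows "\<bar>formP r (offs n r) (symm r n A) x\<bar> \<le> fact r * real r powr (- (real r / p)) * spnorm p r n A"
proof -
  have "(\<Sum>k<r. pnorm p (n k) (blocks n x k) powr p) = 1"
    using pnorm_blocks[OF assms(1), of n r x] assms(4) by simp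
  then have "(\<Prod>k<r. pnorm p (n k) (blocks n x k)) \<le> real r powr (- (real r / p))"
    using assms(1,2) pnorm_nonneg by (intro prod_le_of_sum_powr_eq_1)
  then have "\<bar>mform r n A (blocks n x)\<bar> \<le> real r powr (- (real r / p)) * spnorm p r n A"
    using abs_mform_le_pnorm_prod[OF assms(1,3), of A "blocks n x"] spnorm_nonneg[OF assms(1,3), of A]
    by (meson mult_right_mono order_trans)
  then show ?thesis by (simp add: formP_symm abs_mult mult.assoc)
qed

lemma cmod_mform_le_mform_cmod:
  assumes "\<forall>i\<in>idx r n. A i \<ge> 0"
  shows "cmod (mform r n (\<lambda>i. complex_of_real (A i)) (\<lambda>k i. cnj (xs k i)))
         \<le> mform r n A (\<lambda>k i. cmod (xs k i))"
  unfolding mform_def using assms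
  by (intro order_trans[OF norm_sum] eq_refl sum.cong) (auto simp: norm_mult prod_norm[symmetric])

lemma formP_symm_ge_mform:
  assumes "p > 0" "r \<ge> 1" "\<forall>i\<in>idx r n. A i \<ge> 0" "\<forall>k<r. pnorm p (n k) (xs k) = 1"
  obtains y where "pnorm p (offs n r) y = 1"
    "fact r * real r powr (- (real r / p)) * cmod (mform r n (\<lambda>i. complex_of_real (A i)) (\<lambda>k i. cnj (xs k i)))
     \<le> formP r (offs n r) (symm r n A) y"
proof -
  define c where "c = real r powr (- 1 / p)"
  have c: "c \<ge> 0" "c powr p = 1 / real r" "c ^ r = real r powr (- (real r / p))"
  proof -
    show "c \<ge> 0" by (simp add: c_def)
    have "c powr p = real r powr (- 1)" unfolding c_def powr_powr using assms(1) by simp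
    then show "c powr p = 1 / real r" using assms(2) by (simp add: powr_minus_divide)
    show "c ^ r = real r powr (- (real r / p))"
      unfolding c_def using assms(2) by (subst powr_power) (auto simp: field_simps)
  qed
  obtain y where y: "\<forall>k<r. \<forall>i<n k. blocks n y k i = c * cmod (xs k i)"
    using ex_blocks_eq[of r n "\<lambda>k i. c * cmod (xs k i)"] by blast
  have "pnorm p (n k) (blocks n y k) = c" if "k < r" for k
  proof -
    have "pnorm p (n k) (blocks n y k) = pnorm p (n k) (\<lambda>i. c *\<^sub>R xs k i)"
      using y that c(1) by (intro pnorm_cong) simp
    also have "\<dots> = c" using pnorm_scaleR[OF assms(1), of "n k" c "xs k"] assms(4) that c(1) by simp
    finally show ?thesis .
  qed
  then have "pnorm p (offs n r) y powr p = 1"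
    using pnorm_blocks[OF assms(1), of n r y] c(2) assms(2) by simp
  then have unit: "pnorm p (offs n r) y = 1"
    using pnorm_powr[OF assms(1), of "offs n r" y] pnorm_eq_1_iff[OF assms(1), of "offs n r" y] by simp
  have "mform r n A (blocks n y) = mform r n A (\<lambda>k i. c * cmod (xs k i))"
    using y by (intro mform_cong) simp
  then have formP_y: "formP r (offs n r) (symm r n A) y = fact r * (c ^ r * mform r n A (\<lambda>k i. cmod (xs k i)))"
    by (simp add: formP_symm mform_scale)
  have "c ^ r * cmod (mform r n (\<lambda>i. complex_of_real (A i)) (\<lambda>k i. cnj (xs k i)))
        \<le> c ^ r * mform r n A (\<lambda>k i. cmod (xs k i))"
    using cmod_mform_le_mform_cmod[OF assms(3)] c(1) by (simp add: mult_left_mono)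
  then have "fact r * real r powr (- (real r / p)) * cmod (mform r n (\<lambda>i. complex_of_real (A i)) (\<lambda>k i. cnj (xs k i)))
             \<le> formP r (offs n r) (symm r n A) y"
    unfolding formP_y c(3)[symmetric] mult.assoc by (rule mult_left_mono) simp
  with unit show ?thesis by (rule that)
qed

lemma eta_symm_le:
  assumes "p > 0" "r \<ge> 1" "\<forall>k<r. n k \<ge> 1"
  shows "eta p r (offs n r) (symm r n A) \<le> fact r * real r powr (- (real r / p)) * spnorm p r n A"
proof (rule eta_least)
  have "0 < n 0" using assms(3) assms(2) by (simp add: Suc_le_eq)
  then show "offs n r \<ge> 1" using offs_block_less[of 0 r 0 n] assms(2) by (simp add: offs_def)
qed (rule abs_formP_symm_le[OF assms])

lemma eta_symm_ge:
  assumes "p > 0" "r \<ge> 1" "\<forall>k<r. n k \<ge> 1" "\<forall>i\<in>idx r n. A i \<ge> 0"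
  shows "fact r * real r powr (- (real r / p)) * spnorm p r n A \<le> eta p r (offs n r) (symm r n A)"
proof -
  define q where "q = fact r * real r powr (- (real r / p))"
  have q: "q > 0" using assms(2) by (simp add: q_def)
  have "spnorm p r n A \<le> eta p r (offs n r) (symm r n A) / q"
  proof (rule spnorm_least[OF assms(3)])
    fix xs :: "nat \<Rightarrow> nat \<Rightarrow> complex"
    let ?v = "cmod (mform r n (\<lambda>i. complex_of_real (A i)) (\<lambda>k i. cnj (xs k i)))"
    assume "\<forall>k<r. pnorm p (n k) (xs k) = 1"
    then obtain y where y: "pnorm p (offs n r) y = 1" "q * ?v \<le> formP r (offs n r) (symm r n A) y"
      using formP_symm_ge_mform[OF assms(1,2,4)] unfolding q_def by blast
    note y(2)
    also have "formP r (offs n r) (symm r n A) y \<le> eta p r (offs n r) (symm r n A)"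
      using eta_upper[OF assms(1) y(1), of r "symm r n A"] by linarith
    finally have "q * ?v \<le> eta p r (offs n r) (symm r n A)" .
    then show "?v \<le> eta p r (offs n r) (symm r n A) / q"
      using q by (simp add: pos_le_divide_eq mult.commute)
  qed
  then show ?thesis using q by (simp add: pos_le_divide_eq mult.commute q_def)
qed

theorem theorem16:
  fixes p :: real and r :: nat and n :: "nat \<Rightarrow> nat" and A :: "(nat \<Rightarrow> nat) \<Rightarrow> real"
  assumes "p > 1" and "r \<ge> 1" and "\<forall>k<r. n k \<ge> 1"
  shows "eta p r (\<Sum>k<r. n k) (symm r n A) \<le> fact r / real r powr (real r / p) * spnorm p r n A \<and>
         ((\<forall>i\<in>idx r n. A i \<ge> 0) \<longrightarrow>
         eta p r (\<Sum>k<r. n k) (symm r n A) = fact r / real r powr (real r / p) * spnorm p r n A)"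
proof -
  have p: "p > 0" using assms(1) by simp
  have N: "(\<Sum>k<r. n k) = offs n r" by (simp add: offs_def)
  have c: "fact r / real r powr (real r / p) = fact r * real r powr (- (real r / p))"
    by (simp add: powr_minus_divide)
  note le = eta_symm_le[OF p assms(2,3), of A] and ge = eta_symm_ge[OF p assms(2,3), of A]
  show ?thesis
    unfolding N c using le order_antisym[OF le ge] by blast
qed

end
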